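(* Let $\omega(n)\to+\infty$. If $p=p(n)$ satisfies \[2\frac{\log(n)+\omega(n)}{n}\le p\le 1-\frac{\log(n)+\log(\log(n))+\omega(n)}{n},\] then the probability that $\Gamma\in G(n,p)$ has a non-adjacent domination pair tends to $0$ as $n\to\infty$.
   Context: $G(n,p)$ is the Erdős–Rényi random graph on $n$ vertices with each edge present independently with probability $p$; $\log$ is the natural logarithm. For distinct vertices $a,b$, $a$ dominates $b$ if every vertex adjacent to $b$ is adjacent to or equal to $a$; the pair is non-adjacent if $a$ and $b$ are not adjacent. *)

theory Defs
  imports Complex_Main
begin

definition all_pairs :: "nat \<Rightarrow> nat set set" where
  "all_pairs n = {e. \<exists>a b. a < n \<and> b < n \<and> a \<noteq> b \<and> e = {a, b}}"

definition adj :: "nat set set \<Rightarrow> nat \<Rightarrow> nat \<Rightarrow> bool" where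
  "adj E a b \<longleftrightarrow> {a, b} \<in> E \<and> a \<noteq> b"

definition dominates :: "nat \<Rightarrow> nat set set \<Rightarrow> nat \<Rightarrow> nat \<Rightarrow> bool" where
  "dominates n E a b \<longleftrightarrow> a \<noteq> b \<and>
     (\<forall>v<n. adj E b v \<longrightarrow> (adj E a v \<or> v = a))"

definition has_nonadj_dom_pair :: "nat \<Rightarrow> nat set set \<Rightarrow> bool" where
  "has_nonadj_dom_pair n E \<longleftrightarrow>
     (\<exists>a<n. \<exists>b<n. a \<noteq> b \<and> \<not> adj E a b \<and> dominates n E a b)"

definition gnp_prob :: "nat \<Rightarrow> real \<Rightarrow> (nat set set \<Rightarrow> bool) \<Rightarrow> real" where
  "gnp_prob n p P = (\<Sum>E\<in>{E. E \<subseteq> all_pairs n \<and> P E}.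
      p ^ card E * (1 - p) ^ (card (all_pairs n) - card E))"

end

theory Submission
  imports Defs "HOL-Library.Disjoint_Sets" "HOL-Real_Asymp.Real_Asymp"
begin

text \<open>For fixed vertices \<open>a \<noteq> b\<close>, "\<open>a\<close> and \<open>b\<close> are non-adjacent and \<open>a\<close> dominates \<open>b\<close>"
  means that the edge \<open>ab\<close> is absent and that, for every other vertex \<open>v\<close>, the edge \<open>bv\<close> is
  present only if \<open>av\<close> is. These conditions concern disjoint sets of edges, so the event has
  probability \<open>(1 - p) (1 - p (1 - p))^(n - 2) \<le> (1 - p) exp (-(n - 2) p (1 - p))\<close>, and a union
  bound over the at most \<open>n^2\<close> pairs leaves \<open>n^2 (1 - p) exp (-(n - 2) p (1 - p))\<close>.
  With \<open>L = log n\<close> and \<open>\<omega>\<close> capped at \<open>L\<close>, this is at most \<open>e^(1 - \<omega>)\<close> when \<open>p \<le> 1/2\<close>, since then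
  \<open>p (1 - p) \<ge> (2 L + 2 \<omega> - 1) / n\<close>. When \<open>p \<ge> 1/2\<close>, the function \<open>q \<mapsto> q exp (-(n - 2) q (1 - q))\<close>
  is bounded on the admissible range of \<open>q = 1 - p\<close> by its value at \<open>q\<^sub>0 = (L + log L + \<omega>) / n\<close>,
  and \<open>n^2 q\<^sub>0 exp (-(L + log L + \<omega> - 1)) = (q\<^sub>0 n / L) e^(1 - \<omega>) \<le> 3 e^(1 - \<omega>)\<close>.\<close>

section \<open>Random subsets of a finite set\<close>

lemma sum_Pow_Un_disjoint:
  fixes f g :: "'a set \<Rightarrow> 'b::comm_semiring_1"
  assumes "A \<inter> B = {}"
  shows "(\<Sum>E\<in>Pow (A \<union> B). f (E \<inter> A) * g (E \<inter> B)) = (\<Sum>F\<in>Pow A. f F) * (\<Sum>G\<in>Pow B. g G)"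
proof -
  have bij: "bij_betw (\<lambda>(F, G). F \<union> G) (Pow A \<times> Pow B) (Pow (A \<union> B))"
  proof (rule bij_betwI')
    show "\<And>E. E \<in> Pow (A \<union> B) \<Longrightarrow> \<exists>x\<in>Pow A \<times> Pow B. E = (case x of (F, G) \<Rightarrow> F \<union> G)"
      by (rule_tac x="(E \<inter> A, E \<inter> B)" in bexI) auto
  qed (use assms in \<open>auto, blast+\<close>)
  have "(\<Sum>E\<in>Pow (A \<union> B). f (E \<inter> A) * g (E \<inter> B))
      = (\<Sum>(F, G)\<in>Pow A \<times> Pow B. f ((F \<union> G) \<inter> A) * g ((F \<union> G) \<inter> B))"
    using sum.reindex_bij_betw[OF bij, of "\<lambda>E. f (E \<inter> A) * g (E \<inter> B)"]
    by (simp add: case_prod_unfold)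
  also have "\<dots> = (\<Sum>(F, G)\<in>Pow A \<times> Pow B. f F * g G)"
  proof (intro sum.cong refl, clarify)
    fix F G assume "F \<subseteq> A" "G \<subseteq> B"
    then have "(F \<union> G) \<inter> A = F" "(F \<union> G) \<inter> B = G" using assms by blast+
    then show "f ((F \<union> G) \<inter> A) * g ((F \<union> G) \<inter> B) = f F * g G" by simp
  qed
  also have "\<dots> = (\<Sum>F\<in>Pow A. f F) * (\<Sum>G\<in>Pow B. g G)"
    by (simp add: sum.cartesian_product sum_product)
  finally show ?thesis .
qed

definition subset_weight :: "'a set \<Rightarrow> real \<Rightarrow> 'a set \<Rightarrow> real" where
  "subset_weight S p E = (\<Prod>e\<in>S. if e \<in> E then p else 1 - p)"

definition subset_prob :: "'a set \<Rightarrow> real \<Rightarrow> ('a set \<Rightarrow> bool) \<Rightarrow> real" where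
  "subset_prob S p P = (\<Sum>E\<in>Pow S. if P E then subset_weight S p E else 0)"

lemma subset_weight_Int: "subset_weight S p (E \<inter> S) = subset_weight S p E"
  unfolding subset_weight_def by (intro prod.cong) auto

lemma subset_weight_Un_disjoint:
  assumes "finite A" "finite B" "A \<inter> B = {}"
  shows "subset_weight (A \<union> B) p E = subset_weight A p (E \<inter> A) * subset_weight B p (E \<inter> B)"
  unfolding subset_weight_Int using assms by (simp add: subset_weight_def prod.union_disjoint)

lemma subset_weight_eq_card:
  assumes "finite S" "E \<subseteq> S"
  shows "subset_weight S p E = p ^ card E * (1 - p) ^ (card S - card E)"
proof -
  have "subset_weight S p E = (\<Prod>e\<in>E. p) * (\<Prod>e\<in>S - E. 1 - p)"
    unfolding subset_weight_def using assms
    by (simp add: prod.If_cases Int_absorb1 Diff_eq)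
  then show ?thesis
    using assms by (simp add: card_Diff_subset finite_subset)
qed

lemma subset_prob_nonneg: "0 \<le> p \<Longrightarrow> p \<le> 1 \<Longrightarrow> 0 \<le> subset_prob S p P"
  unfolding subset_prob_def subset_weight_def by (intro sum_nonneg) (simp add: prod_nonneg)

lemma subset_prob_cong:
  "(\<And>E. E \<subseteq> S \<Longrightarrow> P E \<longleftrightarrow> Q E) \<Longrightarrow> subset_prob S p P = subset_prob S p Q"
  unfolding subset_prob_def by (intro sum.cong) auto

lemma subset_prob_True:
  assumes "finite S"
  shows "subset_prob S p (\<lambda>_. True) = 1"
proof -
  have "subset_prob S p (\<lambda>_. True) = (\<Sum>E\<in>Pow S. (\<Prod>e\<in>E. p) * (\<Prod>e\<in>S - E. 1 - p))"
    unfolding subset_prob_def using assms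
    by (intro sum.cong) (auto simp: subset_weight_eq_card card_Diff_subset finite_subset)
  also have "\<dots> = (\<Prod>e\<in>S. p + (1 - p))"
    by (rule prod_add[OF assms, symmetric])
  finally show ?thesis by simp
qed

lemma subset_prob_Un_disjoint:
  assumes "finite A" "finite B" "A \<inter> B = {}"
  shows "subset_prob (A \<union> B) p (\<lambda>E. P (E \<inter> A) \<and> Q (E \<inter> B))
    = subset_prob A p P * subset_prob B p Q"
proof -
  have "(if P F then x else 0) * (if Q G then y else 0) = (if P F \<and> Q G then x * y else 0)"
    for F G and x y :: real
    by simp
  then show ?thesis
    unfolding subset_prob_def subset_weight_Un_disjoint[OF assms]
    by (simp add: sum_Pow_Un_disjoint[OF assms(3), symmetric])
qed

lemma subset_prob_disjoint_blocks:
  fixes B :: "'i \<Rightarrow> 'a set"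
  assumes "finite S" "finite I" "\<And>i. i \<in> I \<Longrightarrow> B i \<subseteq> S" "disjoint_family_on B I"
  shows "subset_prob S p (\<lambda>E. \<forall>i\<in>I. C i (E \<inter> B i)) = (\<Prod>i\<in>I. subset_prob (B i) p (C i))"
  using assms(2,1,3,4)
proof (induction I arbitrary: S rule: finite_induct)
  case empty
  then show ?case by (simp add: subset_prob_True)
next
  case (insert j I)
  define R where "R = S - B j"
  have S: "S = B j \<union> R" and "B j \<inter> R = {}" "finite (B j)" "finite R"
    using insert.prems by (auto simp: R_def intro: finite_subset)
  have BR: "B i \<subseteq> R" if "i \<in> I" for i
    using insert.prems insert.hyps(2) that unfolding R_def disjoint_family_on_insert[OF insert.hyps(2)]
    by blast
  have "subset_prob S p (\<lambda>E. \<forall>i\<in>insert j I. C i (E \<inter> B i))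
      = subset_prob (B j \<union> R) p (\<lambda>E. C j (E \<inter> B j) \<and> (\<lambda>G. \<forall>i\<in>I. C i (G \<inter> B i)) (E \<inter> R))"
    unfolding S using BR by (intro subset_prob_cong) (auto simp: Int_assoc Int_absorb1)
  also have "\<dots> = subset_prob (B j) p (C j) * subset_prob R p (\<lambda>G. \<forall>i\<in>I. C i (G \<inter> B i))"
    by (rule subset_prob_Un_disjoint) fact+
  also have "\<dots> = (\<Prod>i\<in>insert j I. subset_prob (B i) p (C i))"
    using insert BR \<open>finite R\<close> by (simp add: disjoint_family_on_insert)
  finally show ?case .
qed

lemma subset_prob_union_bound:
  assumes "finite I" "0 \<le> p" "p \<le> 1"
  shows "subset_prob S p (\<lambda>E. \<exists>i\<in>I. P i E) \<le> (\<Sum>i\<in>I. subset_prob S p (P i))"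
proof -
  have w: "0 \<le> subset_weight S p E" for E
    unfolding subset_weight_def using assms by (intro prod_nonneg) auto
  have "(if \<exists>i\<in>I. P i E then subset_weight S p E else 0)
      \<le> (\<Sum>i\<in>I. if P i E then subset_weight S p E else 0)" for E
  proof (cases "\<exists>i\<in>I. P i E")
    case True
    then obtain i where "i \<in> I" "P i E" by blast
    then show ?thesis
      using member_le_sum[of i I "\<lambda>i. if P i E then subset_weight S p E else 0"] w assms(1) by simp
  qed (simp add: sum_nonneg w)
  then show ?thesis
    unfolding subset_prob_def by (subst sum.swap) (rule sum_mono)
qed

section \<open>Non-adjacent domination pairs in \<open>G(n, p)\<close>\<close>

lemma finite_all_pairs: "finite (all_pairs n)"
proof -
  have "all_pairs n \<subseteq> (\<lambda>(a, b). {a, b}) ` ({..<n} \<times> {..<n})"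
    unfolding all_pairs_def by auto
  then show ?thesis by (rule finite_subset) auto
qed

lemma gnp_prob_eq_subset_prob: "gnp_prob n p P = subset_prob (all_pairs n) p P"
proof -
  have "gnp_prob n p P = (\<Sum>E\<in>{E \<in> Pow (all_pairs n). P E}. subset_weight (all_pairs n) p E)"
    unfolding gnp_prob_def using finite_all_pairs by (intro sum.cong) (auto simp: subset_weight_eq_card)
  also have "\<dots> = subset_prob (all_pairs n) p P"
    unfolding subset_prob_def by (rule sum.inter_filter) (simp add: finite_all_pairs)
  finally show ?thesis .
qed

lemma subset_prob_singleton_notin: "subset_prob {e} p (\<lambda>F. e \<notin> F) = 1 - p"
  by (simp add: subset_prob_def subset_weight_def Pow_insert)

lemma subset_prob_doubleton_imp:
  assumes "e \<noteq> e'"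
  shows "subset_prob {e, e'} p (\<lambda>F. e' \<in> F \<longrightarrow> e \<in> F) = 1 - p * (1 - p)"
proof -
  have "Pow {e, e'} = {{}, {e}, {e'}, {e, e'}}" by (auto simp: Pow_insert)
  moreover have "{e} \<noteq> {e'}" "{e} \<noteq> {e, e'}" "{e'} \<noteq> {e, e'}" using assms by auto
  ultimately show ?thesis
    using assms by (simp add: subset_prob_def subset_weight_def algebra_simps)
qed

lemma gnp_prob_nonadj_dominates:
  assumes "a < n" "b < n" "a \<noteq> b"
  shows "gnp_prob n p (\<lambda>E. \<not> adj E a b \<and> dominates n E a b) = (1 - p) * (1 - p * (1 - p)) ^ (n - 2)"
proof -
  \<comment> \<open>The block of vertex \<open>a\<close> is the edge \<open>ab\<close>; every other \<open>v \<noteq> b\<close> owns the edges \<open>av\<close> and \<open>bv\<close>.\<close>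
  define I where "I = {..<n} - {b}"
  define B where "B v = (if v = a then {{a, b}} else {{a, v}, {b, v}})" for v
  define C where "C v F = (if v = a then {a, b} \<notin> F else ({b, v} \<in> F \<longrightarrow> {a, v} \<in> F))" for v F
  have "a \<in> I" "finite I"
    using assms unfolding I_def by auto
  have event: "(\<not> adj E a b \<and> dominates n E a b) \<longleftrightarrow> (\<forall>v\<in>I. C v (E \<inter> B v))" for E
  proof -
    have "dominates n E a b \<longleftrightarrow> (\<forall>v\<in>I - {a}. {b, v} \<in> E \<longrightarrow> {a, v} \<in> E)"
      using assms unfolding dominates_def adj_def I_def by auto
    moreover have "(\<forall>v\<in>I. C v (E \<inter> B v)) \<longleftrightarrow> C a (E \<inter> B a) \<and> (\<forall>v\<in>I - {a}. C v (E \<inter> B v))"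
      using \<open>a \<in> I\<close> by blast
    ultimately show ?thesis
      using assms by (simp add: adj_def B_def C_def)
  qed
  have blocks: "B v \<subseteq> all_pairs n" if "v \<in> I" for v
    using that assms unfolding I_def B_def all_pairs_def by auto
  have disjoint: "disjoint_family_on B I"
    unfolding disjoint_family_on_def
  proof (intro ballI impI)
    fix v v' assume "v \<in> I" "v' \<in> I" "v \<noteq> v'"
    then show "B v \<inter> B v' = {}"
      using assms unfolding I_def B_def by (simp add: doubleton_eq_iff)
  qed
  have factor: "subset_prob (B v) p (C v) = 1 - p * (1 - p)" if "v \<in> I - {a}" for v
  proof -
    have "v \<noteq> a" "{a, v} \<noteq> {b, v}" using that assms by (auto simp: doubleton_eq_iff)
    then show ?thesis using subset_prob_doubleton_imp[of "{a, v}" "{b, v}" p] by (simp add: B_def C_def[abs_def])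
  qed
  have "card (I - {a}) = n - 2"
    using assms unfolding I_def by (simp add: card_Diff_subset)
  then have "(\<Prod>v\<in>I - {a}. subset_prob (B v) p (C v)) = (1 - p * (1 - p)) ^ (n - 2)"
    using factor by simp
  moreover have "subset_prob (B a) p (C a) = 1 - p"
    using subset_prob_singleton_notin by (simp add: B_def C_def[abs_def])
  ultimately have "(\<Prod>v\<in>I. subset_prob (B v) p (C v)) = (1 - p) * (1 - p * (1 - p)) ^ (n - 2)"
    using \<open>a \<in> I\<close> \<open>finite I\<close> by (simp add: prod.remove)
  then show ?thesis
    unfolding gnp_prob_eq_subset_prob event
    using subset_prob_disjoint_blocks[OF finite_all_pairs \<open>finite I\<close> blocks disjoint] by simp
qed

lemma gnp_prob_nonadj_dom_pair_le:
  assumes "0 \<le> p" "p \<le> 1"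
  shows "gnp_prob n p (has_nonadj_dom_pair n) \<le> real n ^ 2 * ((1 - p) * (1 - p * (1 - p)) ^ (n - 2))"
proof -
  define D where "D = {(a, b). a < n \<and> b < n \<and> a \<noteq> b}"
  have "finite D" "D \<subseteq> {..<n} \<times> {..<n}"
    unfolding D_def by (auto intro: finite_subset[of _ "{..<n} \<times> {..<n}"])
  then have card_D: "card D \<le> n ^ 2"
    by (metis card_cartesian_product card_lessThan card_mono finite_cartesian_product
        finite_lessThan power2_eq_square)
  have "0 \<le> p * (1 - p)" "p * (1 - p) \<le> 1"
    using assms by (auto intro: mult_le_one)
  then have c: "0 \<le> (1 - p) * (1 - p * (1 - p)) ^ (n - 2)"
    using assms by simp
  have "has_nonadj_dom_pair n = (\<lambda>E. \<exists>(a, b)\<in>D. \<not> adj E a b \<and> dominates n E a b)"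
    unfolding has_nonadj_dom_pair_def D_def by (auto simp: fun_eq_iff)
  then have "gnp_prob n p (has_nonadj_dom_pair n)
      \<le> (\<Sum>(a, b)\<in>D. gnp_prob n p (\<lambda>E. \<not> adj E a b \<and> dominates n E a b))"
    using subset_prob_union_bound[OF \<open>finite D\<close> assms, of "all_pairs n"
        "\<lambda>(a, b) E. \<not> adj E a b \<and> dominates n E a b"]
    by (simp add: gnp_prob_eq_subset_prob case_prod_unfold)
  also have "\<dots> = (\<Sum>(a, b)\<in>D. (1 - p) * (1 - p * (1 - p)) ^ (n - 2))"
    by (intro sum.cong) (auto simp: D_def gnp_prob_nonadj_dominates)
  also have "\<dots> = card D * ((1 - p) * (1 - p * (1 - p)) ^ (n - 2))"
    by (simp add: case_prod_unfold)
  also have "\<dots> \<le> real n ^ 2 * ((1 - p) * (1 - p * (1 - p)) ^ (n - 2))"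
    using card_D c by (intro mult_right_mono) (simp_all flip: of_nat_power)
  finally show ?thesis .
qed

section \<open>The asymptotic estimate\<close>

lemma one_minus_power_le_exp:
  fixes x :: real
  assumes "0 \<le> x" "x \<le> 1"
  shows "(1 - x) ^ m \<le> exp (- (m * x))"
proof -
  have "(1 - x) ^ m \<le> exp (- x) ^ m"
    using assms exp_ge_add_one_self[of "- x"] by (intro power_mono) auto
  then show ?thesis
    by (simp flip: exp_of_nat_mult)
qed

lemma mult_one_minus_ge:
  fixes x x0 :: real
  assumes "x0 \<le> x" "x \<le> 1 - x0"
  shows "x0 * (1 - x0) \<le> x * (1 - x)"
proof -
  have "0 \<le> (x - x0) * (1 - x - x0)"
    using assms by simp
  then show ?thesis
    by (simp add: algebra_simps)
qed

lemma scaled_mult_one_minus_ge: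
  fixes N c :: real
  assumes "0 < N" "0 \<le> c" "c * (c + 2) \<le> N"
  shows "c - 1 \<le> (N - 2) * (c / N) * (1 - c / N)"
proof -
  have "(N - 2) * (c / N) * (1 - c / N) = c - c * (c + 2) / N + 2 * (c / N) ^ 2"
    using assms(1) by (simp add: field_simps power2_eq_square)
  moreover have "c * (c + 2) / N \<le> 1"
    using assms by simp
  ultimately show ?thesis
    by (smt (verit) zero_le_power2)
qed

text \<open>The growth \<open>x / x\<^sub>0 \<le> exp ((x - x\<^sub>0) / x\<^sub>0)\<close> of the prefactor is paid for by the increase
  of at least \<open>c (x - x\<^sub>0) / 4\<close> in the exponent.\<close>

lemma mult_exp_mult_one_minus_le:
  fixes c x x0 :: real
  assumes "0 < x0" "x0 \<le> x" "x + x0 \<le> 3 / 4" "4 \<le> c * x0"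
  shows "x * exp (- (c * (x * (1 - x)))) \<le> x0 * exp (- (c * (x0 * (1 - x0))))"
proof -
  have "(x - x0) / 4 \<le> x * (1 - x) - x0 * (1 - x0)"
  proof -
    have "(x - x0) * (1 / 4) \<le> (x - x0) * (1 - x - x0)"
      using assms by (intro mult_left_mono) auto
    then show ?thesis
      by (simp add: algebra_simps)
  qed
  moreover have "(x - x0) / x0 \<le> c * ((x - x0) / 4)"
  proof -
    have "0 \<le> (x - x0) * (c * x0 - 4)"
      using assms by simp
    then show ?thesis
      using assms(1) by (simp add: field_simps)
  qed
  moreover have "0 \<le> c"
    using assms by (smt (verit) zero_le_mult_iff)
  ultimately have growth: "(x - x0) / x0 \<le> c * (x * (1 - x) - x0 * (1 - x0))"
    by (meson mult_left_mono order_trans)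
  have "x / x0 = 1 + (x - x0) / x0"
    using assms(1) by (simp add: field_simps)
  also have "\<dots> \<le> exp ((x - x0) / x0)"
    by (rule exp_ge_add_one_self)
  also have "\<dots> \<le> exp (c * (x * (1 - x) - x0 * (1 - x0)))"
    using growth by simp
  finally have "x / x0 \<le> exp (c * (x * (1 - x) - x0 * (1 - x0)))" .
  then have "x \<le> x0 * exp (c * (x * (1 - x)) - c * (x0 * (1 - x0)))"
    using assms(1) by (simp add: field_simps right_diff_distrib)
  then have "x * exp (- (c * (x * (1 - x))))
      \<le> x0 * exp (c * (x * (1 - x)) - c * (x0 * (1 - x0))) * exp (- (c * (x * (1 - x))))"
    by (rule mult_right_mono) simp
  then show ?thesis
    by (simp add: mult.assoc flip: exp_add)
qed

lemma union_bound_estimate_sparse: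
  fixes N w p :: real
  assumes L: "8 \<le> ln N" "8 * ln N + 16 * ln N ^ 2 \<le> N"
    and w: "0 \<le> w" "w \<le> ln N"
    and p: "2 * (ln N + w) / N \<le> p" "p \<le> 1 / 2"
  shows "N ^ 2 * (1 - p) * exp (- ((N - 2) * p * (1 - p))) \<le> exp (1 - w)"
proof -
  define c where "c = 2 * (ln N + w)"
  have N: "4 \<le> N"
    using L by (smt (verit) zero_le_power2)
  have "c \<le> 4 * ln N" "0 \<le> c"
    using L w unfolding c_def by auto
  then have "c * (c + 2) \<le> 4 * ln N * (4 * ln N + 2)"
    by (intro mult_mono) auto
  then have c: "0 \<le> c" "c * (c + 2) \<le> N"
    using \<open>0 \<le> c\<close> L by (auto simp: algebra_simps power2_eq_square)
  then have "c / N \<le> 1 / 2"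
    using N by (simp add: field_simps) (smt (verit) mult_nonneg_nonneg)
  have "c - 1 \<le> (N - 2) * (c / N) * (1 - c / N)"
    using N c by (intro scaled_mult_one_minus_ge) auto
  also have "\<dots> \<le> (N - 2) * (p * (1 - p))"
    using mult_one_minus_ge[of "c / N" p] p \<open>c / N \<le> 1 / 2\<close> N
    unfolding c_def mult.assoc by (intro mult_left_mono) auto
  finally have "exp (- ((N - 2) * p * (1 - p))) \<le> exp (1 - c)"
    by (simp add: mult.assoc)
  moreover have "0 \<le> p"
    using c N p(1) unfolding c_def by (smt (verit) divide_nonneg_pos)
  ultimately have "N ^ 2 * (1 - p) * exp (- ((N - 2) * p * (1 - p))) \<le> N ^ 2 * exp (1 - c)"
    using p N by (intro mult_mono) (auto simp: mult_left_le)
  also have "N ^ 2 * exp (1 - c) = exp (1 - 2 * w)"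
  proof -
    have "exp (2 * ln N) = N ^ 2"
      using N exp_of_nat_mult[of 2 "ln N"] by simp
    moreover have "exp (1 - c) = exp (1 - 2 * w) / exp (2 * ln N)"
      unfolding exp_diff[symmetric] c_def by (simp add: algebra_simps)
    ultimately show ?thesis
      using N by simp
  qed
  also have "\<dots> \<le> exp (1 - w)"
    using w by simp
  finally show ?thesis .
qed

lemma union_bound_estimate_dense:
  fixes N w p :: real
  assumes L: "8 \<le> ln N" "8 * ln N + 16 * ln N ^ 2 \<le> N"
    and w: "0 \<le> w" "w \<le> ln N"
    and p: "(ln N + ln (ln N) + w) / N \<le> 1 - p" "1 / 2 \<le> p"
  shows "N ^ 2 * (1 - p) * exp (- ((N - 2) * p * (1 - p))) \<le> 3 * exp (1 - w)"
proof -
  define c where "c = ln N + ln (ln N) + w"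
  define q where "q = 1 - p"
  have N: "4 \<le> N"
    using L by (smt (verit) zero_le_power2)
  have "0 \<le> ln (ln N)" "ln (ln N) \<le> ln N"
    using L ln_le_minus_one[of "ln N"] by auto
  then have c_bounds: "ln N \<le> c" "c \<le> 3 * ln N"
    using w unfolding c_def by auto
  then have "c * (c + 2) \<le> 4 * ln N * (4 * ln N + 2)"
    using L by (intro mult_mono) auto
  then have c: "0 \<le> c" "c * (c + 2) \<le> N"
    using c_bounds L by (auto simp: algebra_simps power2_eq_square)
  have "c * 4 \<le> c * (c + 2)"
    using c_bounds L by (intro mult_left_mono) auto
  then have "c / N \<le> 1 / 4"
    using c N by (simp add: field_simps)
  moreover have "0 < c / N"
    using c_bounds L N by simp
  moreover have "4 \<le> (N - 2) * (c / N)"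
  proof -
    have "(N - 2) * (c / N) = c - 2 * (c / N)"
      using N by (simp add: field_simps)
    then show ?thesis
      using c_bounds L \<open>c / N \<le> 1 / 4\<close> by linarith
  qed
  moreover have "c / N \<le> q" "q \<le> 1 / 2"
    using p unfolding c_def q_def by auto
  ultimately have "q * exp (- ((N - 2) * (q * (1 - q))))
      \<le> c / N * exp (- ((N - 2) * (c / N * (1 - c / N))))"
    by (intro mult_exp_mult_one_minus_le) auto
  also have "\<dots> \<le> c / N * exp (1 - c)"
  proof -
    have "c - 1 \<le> (N - 2) * (c / N * (1 - c / N))"
      using scaled_mult_one_minus_ge[of N c] c N by (simp add: mult.assoc)
    then show ?thesis
      using \<open>0 < c / N\<close> by (intro mult_left_mono) auto
  qed
  finally have "(1 - p) * exp (- ((N - 2) * p * (1 - p))) \<le> c / N * exp (1 - c)"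
    unfolding q_def by (simp add: mult.assoc mult.commute[of "1 - p" p])
  then have "N ^ 2 * (1 - p) * exp (- ((N - 2) * p * (1 - p))) \<le> N ^ 2 * (c / N * exp (1 - c))"
    unfolding mult.assoc[of "N ^ 2"] by (rule mult_left_mono) simp
  also have "N ^ 2 * (c / N * exp (1 - c)) = c / ln N * exp (1 - w)"
  proof -
    have "exp (ln N + ln (ln N)) = N * ln N"
      using N L by (simp add: exp_add)
    moreover have "exp (1 - c) = exp (1 - w) / exp (ln N + ln (ln N))"
      unfolding exp_diff[symmetric] c_def by (simp add: algebra_simps)
    ultimately show ?thesis
      using N L by (simp add: field_simps power2_eq_square)
  qed
  also have "\<dots> \<le> 3 * exp (1 - w)"
    using c_bounds L by (intro mult_right_mono) (auto simp: field_simps)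
  finally show ?thesis .
qed

lemma union_bound_estimate:
  fixes N w p :: real
  assumes "8 \<le> ln N" "8 * ln N + 16 * ln N ^ 2 \<le> N" "0 \<le> w" "w \<le> ln N"
    "2 * (ln N + w) / N \<le> p" "(ln N + ln (ln N) + w) / N \<le> 1 - p"
  shows "N ^ 2 * (1 - p) * exp (- ((N - 2) * p * (1 - p))) \<le> 3 * exp (1 - w)"
proof (cases "p \<le> 1 / 2")
  case True
  then show ?thesis
    using union_bound_estimate_sparse[OF assms(1-5)] by (smt (verit) exp_gt_zero)
next
  case False
  then show ?thesis
    using union_bound_estimate_dense[OF assms(1-4,6)] by simp
qed

lemma gnp_prob_nonadj_dom_pair_bound:
  fixes n :: nat and \<omega> p :: real
  assumes n: "8 \<le> ln n" "8 * ln n + 16 * ln n ^ 2 \<le> n" and "0 \<le> \<omega>"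
    and p: "2 * (ln n + \<omega>) / n \<le> p" "p \<le> 1 - (ln n + ln (ln n) + \<omega>) / n"
  shows "0 \<le> gnp_prob n p (has_nonadj_dom_pair n)"
    and "gnp_prob n p (has_nonadj_dom_pair n) \<le> 3 * exp (1 - min \<omega> (ln n))"
proof -
  \<comment> \<open>Capping \<open>\<omega>\<close> at \<open>log n\<close> keeps the factor \<open>q\<^sub>0 n / log n\<close> of the dense case bounded.\<close>
  define w where "w = min \<omega> (ln n)"
  have "4 \<le> real n"
    using n by (smt (verit) zero_le_power2)
  have w: "0 \<le> w" "w \<le> ln n" "w \<le> \<omega>"
    using n \<open>0 \<le> \<omega>\<close> unfolding w_def by auto
  have p_w: "2 * (ln n + w) / n \<le> p" "(ln n + ln (ln n) + w) / n \<le> 1 - p"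
    using p w(3) \<open>4 \<le> real n\<close> by (smt (verit) divide_right_mono of_nat_0_le_iff)+
  moreover have "0 \<le> 2 * (ln n + w) / n" "0 \<le> (ln n + ln (ln n) + w) / n"
    using n w by auto
  ultimately have "0 \<le> p" "p \<le> 1" "0 \<le> p * (1 - p)" "p * (1 - p) \<le> 1"
    by (auto intro: mult_le_one)
  then show "0 \<le> gnp_prob n p (has_nonadj_dom_pair n)"
    unfolding gnp_prob_eq_subset_prob by (simp add: subset_prob_nonneg)
  have "gnp_prob n p (has_nonadj_dom_pair n) \<le> real n ^ 2 * ((1 - p) * (1 - p * (1 - p)) ^ (n - 2))"
    by (rule gnp_prob_nonadj_dom_pair_le) fact+
  also have "\<dots> \<le> real n ^ 2 * ((1 - p) * exp (- (real (n - 2) * (p * (1 - p)))))"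
    using one_minus_power_le_exp[of "p * (1 - p)" "n - 2"] \<open>p \<le> 1\<close> \<open>0 \<le> p * (1 - p)\<close> \<open>p * (1 - p) \<le> 1\<close>
    by (intro mult_left_mono) auto
  also have "\<dots> = real n ^ 2 * (1 - p) * exp (- ((real n - 2) * p * (1 - p)))"
    using \<open>4 \<le> real n\<close> by (simp add: of_nat_diff mult.assoc)
  also have "\<dots> \<le> 3 * exp (1 - w)"
    using n w p_w by (intro union_bound_estimate) auto
  finally show "gnp_prob n p (has_nonadj_dom_pair n) \<le> 3 * exp (1 - min \<omega> (ln n))"
    unfolding w_def .
qed

lemma filterlim_min_at_top:
  fixes f g :: "'a \<Rightarrow> real"
  assumes "filterlim f at_top F" "filterlim g at_top F"
  shows "filterlim (\<lambda>x. min (f x) (g x)) at_top F"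
  using assms unfolding filterlim_at_top by (auto intro: eventually_conj[THEN eventually_mono])

theorem proposition2p10:
  fixes \<omega> :: "nat \<Rightarrow> real" and p :: "nat \<Rightarrow> real"
  assumes "filterlim \<omega> at_top sequentially"
    and "eventually (\<lambda>n. 2 * (ln (real n) + \<omega> n) / real n \<le> p n \<and>
           p n \<le> 1 - (ln (real n) + ln (ln (real n)) + \<omega> n) / real n) sequentially"
  shows "(\<lambda>n. gnp_prob n (p n) (has_nonadj_dom_pair n)) \<longlonglongrightarrow> 0"
proof -
  define w where "w n = min (\<omega> n) (ln (real n))" for n
  have "filterlim (\<lambda>n. ln (real n)) at_top sequentially"
    by real_asymp
  then have "filterlim (\<lambda>n. - w n) at_bot sequentially"
    using assms(1) unfolding w_def filterlim_uminus_at_top[symmetric] by (rule filterlim_min_at_top[rotated])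
  then have "filterlim (\<lambda>n. 1 - w n) at_bot sequentially"
    using filterlim_tendsto_add_at_bot_iff[OF tendsto_const, where g = "\<lambda>n. - w n" and c = 1] by simp
  then have lim: "(\<lambda>n. 3 * exp (1 - w n)) \<longlonglongrightarrow> 0"
    using filterlim_compose[OF exp_at_bot] by (auto intro: tendsto_mult_right_zero)
  have "eventually (\<lambda>n. 8 \<le> ln (real n)) sequentially"
    by real_asymp
  moreover have "eventually (\<lambda>n. 8 * ln (real n) + 16 * ln (real n) ^ 2 \<le> real n) sequentially"
    by real_asymp
  moreover have "eventually (\<lambda>n. 0 \<le> \<omega> n) sequentially"
    using assms(1) by (simp add: filterlim_at_top)
  ultimately have "eventually (\<lambda>n. 0 \<le> gnp_prob n (p n) (has_nonadj_dom_pair n) \<and>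
      gnp_prob n (p n) (has_nonadj_dom_pair n) \<le> 3 * exp (1 - w n)) sequentially"
    using assms(2) unfolding w_def
    by eventually_elim (use gnp_prob_nonadj_dom_pair_bound in blast)
  then show ?thesis
    by (intro tendsto_sandwich[OF _ _ tendsto_const lim])
      (auto elim: eventually_mono)
qed

end
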